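(* Let $Z\subset\mathbb{S}_3$ be a finite nonempty set of points. Then the following are equivalent: (i) $\alpha(Z)=\alpha(2Z)=\alpha(3Z)=\alpha(4Z)=1$; (ii) $Z=\{Q\}$ where $Q$ is the point $E_i\cap\widetilde{L_{ij}}$ for some distinct $i,j\in\{1,2,3\}$.
   Context: Let $P_1,P_2,P_3\in\mathbb{P}^2(\mathbb{C})$ be three general points and $f\colon\mathbb{S}_3\to\mathbb{P}^2$ the blow-up at them, with exceptional curves $E_i=f^{-1}(P_i)$; let $H$ be the pullback of the class of a line and $\mathbb{L}_3=3H-E_1-E_2-E_3=-K_{\mathbb{S}_3}$. For distinct $i,j$, $L_{ij}$ is the line through $P_i,P_j$ and $\widetilde{L_{ij}}$ its proper transform. For a finite set $Z\subset\mathbb{S}_3$ with ideal sheaf $\mathcal{I}_Z$ and a positive integer $m$, $\alpha(mZ)=\min\{d\ge 0:\ H^0(\mathbb{S}_3,d\mathbb{L}_3\otimes\mathcal{I}_Z^{(m)})\neq 0\}$, i.e. the least $d$ such that some effective divisor $D\in|d\mathbb{L}_3|$ has multiplicity at least $m$ at every point of $Z$. *)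

theory Defs
  imports "HOL-Computational_Algebra.Polynomial"
begin

(* Homogeneous coordinates: vectors of C^3 as triples. *)
type_synonym cpt = "complex \<times> complex \<times> complex"

definition vadd :: "cpt \<Rightarrow> cpt \<Rightarrow> cpt" where
  "vadd = (\<lambda>(a,b,c) (x,y,z). (a+x, b+y, c+z))"

definition smul :: "complex \<Rightarrow> cpt \<Rightarrow> cpt" where
  "smul l = (\<lambda>(x,y,z). (l*x, l*y, l*z))"

definition det3 :: "cpt \<Rightarrow> cpt \<Rightarrow> cpt \<Rightarrow> complex" where
  "det3 = (\<lambda>(a1,a2,a3) (b1,b2,b3) (c1,c2,c3).
      a1*(b2*c3 - b3*c2) - a2*(b1*c3 - b3*c1) + a3*(b1*c2 - b2*c1))"

(* canonical representative of a point of P^2: first nonzero coordinate equals 1 *)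
definition normalized :: "cpt \<Rightarrow> bool" where
  "normalized = (\<lambda>(x,y,z). x = 1 \<or> (x = 0 \<and> y = 1) \<or> (x = 0 \<and> y = 0 \<and> z = 1))"

definition pnorm :: "cpt \<Rightarrow> cpt" where
  "pnorm = (\<lambda>(x,y,z). if x \<noteq> 0 then (1, y/x, z/x) else if y \<noteq> 0 then (0, 1, z/y)
                      else (0, 0, 1))"

(* A form of degree n in x,y,z is a coefficient function c a b e (coefficient of
   x^a y^b z^e), vanishing off a+b+e = n. *)
definition hmonos :: "nat \<Rightarrow> (nat \<times> nat \<times> nat) set" where
  "hmonos n = {(a,b,e). a + b + e = n}"

definition hform :: "nat \<Rightarrow> (nat \<Rightarrow> nat \<Rightarrow> nat \<Rightarrow> complex) \<Rightarrow> bool" where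
  "hform n c \<longleftrightarrow> (\<forall>a b e. a + b + e \<noteq> n \<longrightarrow> c a b e = 0)"

(* F(q + s v) as a univariate polynomial in s *)
definition pencil :: "nat \<Rightarrow> (nat \<Rightarrow> nat \<Rightarrow> nat \<Rightarrow> complex) \<Rightarrow> cpt \<Rightarrow> cpt \<Rightarrow> complex poly" where
  "pencil n c q v = (\<Sum>(a,b,e)\<in>hmonos n.
      smult (c a b e) ([:fst q, fst v:] ^ a * [:fst (snd q), fst (snd v):] ^ b
                       * [:snd (snd q), snd (snd v):] ^ e))"

(* F(p + u (r + t w)) as a bivariate polynomial: outer variable u, inner variable t *)
definition bipencil :: "nat \<Rightarrow> (nat \<Rightarrow> nat \<Rightarrow> nat \<Rightarrow> complex) \<Rightarrow> cpt \<Rightarrow> cpt \<Rightarrow> cpt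
                         \<Rightarrow> complex poly poly" where
  "bipencil n c p r w = (\<Sum>(a,b,e)\<in>hmonos n.
      smult [:c a b e:] ([: [:fst p:], [:fst r, fst w:] :] ^ a
                       * [: [:fst (snd p):], [:fst (snd r), fst (snd w):] :] ^ b
                       * [: [:snd (snd p):], [:snd (snd r), snd (snd w):] :] ^ e))"

definition mult_plane_ge :: "nat \<Rightarrow> (nat \<Rightarrow> nat \<Rightarrow> nat \<Rightarrow> complex) \<Rightarrow> cpt \<Rightarrow> nat \<Rightarrow> bool" where
  "mult_plane_ge n c q m \<longleftrightarrow> (\<forall>v. monom 1 m dvd pencil n c q v)"

definition oth1 :: "nat \<Rightarrow> nat" where "oth1 i = (if i = 1 then 2 else 1)"
definition oth2 :: "nat \<Rightarrow> nat" where "oth2 i = (if i = 3 then 2 else 3)"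

(* Points of S_3: Pl q = a point [q] of P^2 other than P_1,P_2,P_3 (q normalized);
   Ex i r = the point of E_i corresponding to the tangent direction at P_i of the line
   through P_i and [r], where [r] is a (normalized) point of the opposite line L_jk. *)
datatype s3pt = Pl cpt | Ex nat cpt

definition in_S3 :: "(nat \<Rightarrow> cpt) \<Rightarrow> s3pt \<Rightarrow> bool" where
  "in_S3 P Q = (case Q of
      Pl q \<Rightarrow> normalized q \<and> (\<forall>i\<in>{1,2,3}. \<not> (\<exists>l. q = smul l (P i)))
    | Ex i r \<Rightarrow> i \<in> {1,2,3} \<and> normalized r \<and>
                (\<exists>a b. r = vadd (smul a (P (oth1 i))) (smul b (P (oth2 i)))))"

(* second vector spanning the opposite line, independent of r *)
definition chartw :: "(nat \<Rightarrow> cpt) \<Rightarrow> nat \<Rightarrow> cpt \<Rightarrow> cpt" where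
  "chartw P i r = (if \<exists>l. r = smul l (P (oth1 i)) then P (oth2 i) else P (oth1 i))"

(* D in |d L_3| given by the plane curve c of degree 3d with mult >= d at each P_i:
   D = strict transform + sum (mult_{P_i} - d) E_i. mult_ge P d c m Q: mult_Q D >= m.
   At a point of E_i we use the blow-up chart (u,t) -> [P_i + u (r + t w)], where the
   local equation of D is F(P_i + u(r + t w)) / u^d. *)
definition mult_ge :: "(nat \<Rightarrow> cpt) \<Rightarrow> nat \<Rightarrow> (nat \<Rightarrow> nat \<Rightarrow> nat \<Rightarrow> complex) \<Rightarrow> nat
                        \<Rightarrow> s3pt \<Rightarrow> bool" where
  "mult_ge P d c m Q = (case Q of
      Pl q \<Rightarrow> mult_plane_ge (3*d) c q m
    | Ex i r \<Rightarrow> (let G = bipencil (3*d) c (P i) r (chartw P i r) in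
                 \<forall>j l. j + l < m \<longrightarrow> coeff (coeff G (j + d)) l = 0))"

(* nonzero sections of d L_3 = -d K *)
definition in_linsys :: "(nat \<Rightarrow> cpt) \<Rightarrow> nat \<Rightarrow> (nat \<Rightarrow> nat \<Rightarrow> nat \<Rightarrow> complex) \<Rightarrow> bool" where
  "in_linsys P d c \<longleftrightarrow> hform (3*d) c \<and> c \<noteq> (\<lambda>_ _ _. 0) \<and>
      (\<forall>i\<in>{1,2,3}. mult_plane_ge (3*d) c (P i) d)"

definition alpha :: "(nat \<Rightarrow> cpt) \<Rightarrow> nat \<Rightarrow> s3pt set \<Rightarrow> nat" where
  "alpha P m Z = (LEAST d. \<exists>c. in_linsys P d c \<and> (\<forall>Q\<in>Z. mult_ge P d c m Q))"

end

theory Submission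
  imports Defs "HOL-Library.Product_Plus"
begin

text \<open>
  A divisor in \<open>|L\<^sub>3|\<close> is the strict transform of a plane cubic \<open>F\<close> through
  \<open>P\<^sub>1, P\<^sub>2, P\<^sub>3\<close>. A nonzero cubic has no point of multiplicity four, so every point of
  \<open>Z\<close> lies on an exceptional curve \<open>E\<^sub>i\<close>. In the blow-up chart
  \<open>(u, t) \<mapsto> P\<^sub>i + u (r + t w)\<close>, multiplicity four at the point \<open>r\<close> of \<open>E\<^sub>i\<close> kills every
  coefficient of \<open>F(P\<^sub>i + u (r + t w))\<close> except those of \<open>u\<^sup>3t\<^sup>2\<close> and \<open>u\<^sup>3t\<^sup>3\<close>. As \<open>F\<close> also
  vanishes at \<open>P\<^sub>j\<close> and \<open>P\<^sub>k\<close>, this forces \<open>r = P\<^sub>j\<close> (or \<open>P\<^sub>k\<close>) and, in the coordinates of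
  the frame \<open>P\<^sub>1, P\<^sub>2, P\<^sub>3\<close>, \<open>F = \<alpha> x\<^sub>j x\<^sub>k\<^sup>2\<close>, i.e. \<open>F = L\<^sub>i\<^sub>j\<^sup>2 L\<^sub>i\<^sub>k\<close>. This cubic determines
  \<open>(i, j)\<close>, so \<open>Z\<close> is a single point. Conversely \<open>L\<^sub>i\<^sub>j\<^sup>2 L\<^sub>i\<^sub>k\<close> has multiplicity four at
  \<open>E\<^sub>i \<inter> L\<^sub>i\<^sub>j\<close>, and a nonzero constant vanishes nowhere, so \<open>\<alpha>(mZ) = 1\<close> for \<open>m \<le> 4\<close>.
\<close>

type_synonym form_coeffs = "nat \<Rightarrow> nat \<Rightarrow> nat \<Rightarrow> complex"

lemma poly_poly_const_eq_poly_map_poly: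
  fixes G :: "'a::comm_semiring_1 poly poly"
  shows "poly (poly G [:u:]) t = poly (map_poly (\<lambda>a. poly a t) G) u"
  by (induction G) (auto simp: map_poly_pCons)

lemma bivariate_poly_eqI:
  fixes G H :: "'a::{idom, ring_char_0} poly poly"
  assumes "\<And>u t. poly (poly G [:u:]) t = poly (poly H [:u:]) t"
  shows "G = H"
proof (rule poly_eqI)
  fix k
  have "poly (coeff G k) t = poly (coeff H k) t" for t
  proof -
    have "map_poly (\<lambda>a. poly a t) G = map_poly (\<lambda>a. poly a t) H"
      using assms by (simp add: poly_eq_poly_eq_iff[symmetric] fun_eq_iff poly_poly_const_eq_poly_map_poly)
    then show ?thesis by (metis coeff_map_poly poly_0)
  qed
  then show "coeff G k = coeff H k" by (simp add: poly_eq_poly_eq_iff[symmetric] fun_eq_iff)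
qed

lemma poly_eq_if_eq_off_0:
  fixes A B :: "'a::{idom, ring_char_0} poly"
  assumes "\<And>s. s \<noteq> 0 \<Longrightarrow> poly A s = poly B s"
  shows "A = B"
proof (rule ccontr)
  assume "A \<noteq> B"
  then have "finite {s. poly (A - B) s = 0}" by (intro poly_roots_finite) simp
  moreover have "UNIV - {0} \<subseteq> {s. poly (A - B) s = 0}" using assms by auto
  ultimately have "finite (UNIV :: 'a set)" by (metis finite_Diff2 finite.emptyI finite.insertI finite_subset)
  then show False using infinite_UNIV_char_0 by blast
qed

section \<open>Ternary forms\<close>

lemma finite_hmonos: "finite (hmonos n)"
proof -
  have "hmonos n \<subseteq> {0..n} \<times> {0..n} \<times> {0..n}" by (auto simp: hmonos_def)
  then show ?thesis by (rule finite_subset) auto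
qed

lemma hmonos_0: "hmonos 0 = {(0, 0, 0)}"
  by (auto simp: hmonos_def)

lemma hmonos_1: "hmonos 1 = {(1, 0, 0), (0, 1, 0), (0, 0, 1)}"
  by (auto simp: hmonos_def)

definition form_val :: "nat \<Rightarrow> form_coeffs \<Rightarrow> cpt \<Rightarrow> complex" where
  "form_val n c v = (\<Sum>(a, b, e)\<in>hmonos n. c a b e * fst v ^ a * fst (snd v) ^ b * snd (snd v) ^ e)"

definition form_coeff :: "form_coeffs \<Rightarrow> nat \<times> nat \<times> nat \<Rightarrow> complex" where
  "form_coeff c m = c (fst m) (fst (snd m)) (snd (snd m))"

definition form_mult :: "nat \<Rightarrow> form_coeffs \<Rightarrow> nat \<Rightarrow> form_coeffs \<Rightarrow> form_coeffs" where
  "form_mult n1 c1 n2 c2 a b e =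
     (\<Sum>(m1, m2)\<in>{(m1, m2) \<in> hmonos n1 \<times> hmonos n2. m1 + m2 = (a, b, e)}.
        form_coeff c1 m1 * form_coeff c2 m2)"

lemma hform_form_mult: "hform (n1 + n2) (form_mult n1 c1 n2 c2)"
  unfolding hform_def form_mult_def
  by (auto intro!: sum.neutral simp: hmonos_def)

lemma form_val_form_mult:
  "form_val (n1 + n2) (form_mult n1 c1 n2 c2) v = form_val n1 c1 v * form_val n2 c2 v"
proof -
  obtain x y z where v: "v = (x, y, z)" by (cases v)
  define mon where "mon = (\<lambda>(a, b, e). x ^ a * y ^ b * z ^ e)"
  define coef1 where "coef1 = form_coeff c1"
  define coef2 where "coef2 = form_coeff c2"
  have mon_add: "mon (m1 + m2) = mon m1 * mon m2" for m1 m2 :: "nat \<times> nat \<times> nat"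
    by (cases m1; cases m2) (simp add: mon_def power_add)
  have val: "form_val n c v = (\<Sum>m\<in>hmonos n. form_coeff c m * mon m)" for n c
    unfolding form_val_def v mon_def by (intro sum.cong) (auto simp: form_coeff_def mult.assoc)
  let ?S = "hmonos n1 \<times> hmonos n2"
  let ?h = "\<lambda>(m1, m2). coef1 m1 * coef2 m2 * mon (m1 + m2)"
  have coeff_mult: "form_coeff (form_mult n1 c1 n2 c2) m =
      (\<Sum>pr\<in>{pr \<in> ?S. case_prod (+) pr = m}. coef1 (fst pr) * coef2 (snd pr))" for m
    by (cases m) (simp add: form_mult_def form_coeff_def coef1_def coef2_def split_def mem_Times_iff)
  have "form_val (n1 + n2) (form_mult n1 c1 n2 c2) v =
      (\<Sum>m\<in>hmonos (n1 + n2). \<Sum>pr\<in>{pr \<in> ?S. case_prod (+) pr = m}. ?h pr)"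
    unfolding val coeff_mult sum_distrib_right by (intro sum.cong refl) (auto simp: split_def)
  also have "\<dots> = sum ?h ?S"
    by (rule sum.group) (auto simp: finite_hmonos, auto simp: hmonos_def)
  also have "\<dots> = (\<Sum>m1\<in>hmonos n1. coef1 m1 * mon m1) * (\<Sum>m2\<in>hmonos n2. coef2 m2 * mon m2)"
    by (simp add: sum.cartesian_product sum_product mon_add mult_ac)
  finally show ?thesis unfolding val coef1_def coef2_def .
qed

definition form_one :: form_coeffs where
  "form_one a b e = (if a = 0 \<and> b = 0 \<and> e = 0 then 1 else 0)"

primrec form_power :: "nat \<Rightarrow> form_coeffs \<Rightarrow> nat \<Rightarrow> form_coeffs" where
  "form_power n c 0 = form_one"
| "form_power n c (Suc k) = form_mult n c (n * k) (form_power n c k)"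

lemma form_val_form_power: "form_val (n * k) (form_power n c k) v = form_val n c v ^ k"
proof (induction k)
  case 0
  show ?case by (simp add: form_val_def hmonos_0 form_one_def)
next
  case (Suc k)
  then show ?case by (metis form_val_form_mult form_power.simps(2) mult_Suc_right power_Suc)
qed

lemma form_val_smul: "form_val n c (smul l v) = l ^ n * form_val n c v"
  unfolding form_val_def sum_distrib_left
proof (intro sum.cong refl)
  fix m assume "m \<in> hmonos n"
  then obtain a b e where m: "m = (a, b, e)" and n: "n = a + b + e" by (auto simp: hmonos_def)
  show "(case m of (a, b, e) \<Rightarrow> c a b e * fst (smul l v) ^ a * fst (snd (smul l v)) ^ b * snd (snd (smul l v)) ^ e) =
      l ^ n * (case m of (a, b, e) \<Rightarrow> c a b e * fst v ^ a * fst (snd v) ^ b * snd (snd v) ^ e)"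
    unfolding m n by (simp add: smul_def split_def power_add power_mult_distrib mult_ac)
qed

text \<open>\<open>F(1, y, z)\<close> as a polynomial in \<open>z\<close> with coefficients in \<open>\<complex>[y]\<close>.\<close>

definition dehomogenize :: "nat \<Rightarrow> form_coeffs \<Rightarrow> complex poly poly" where
  "dehomogenize n c = (\<Sum>(a, b, e)\<in>hmonos n. monom (monom (c a b e) b) e)"

lemma poly_dehomogenize: "poly (poly (dehomogenize n c) [:z:]) y = form_val n c (1, y, z)"
  by (simp add: dehomogenize_def form_val_def poly_sum poly_monom split_def mult_ac)

lemma coeff_dehomogenize:
  "coeff (coeff (dehomogenize n c) e) b = (if b + e \<le> n then c (n - b - e) b e else 0)"
proof -
  have "coeff (coeff (dehomogenize n c) e) b =
      (\<Sum>m\<in>hmonos n. if m = (n - b - e, b, e) then c (n - b - e) b e else 0)"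
    unfolding dehomogenize_def coeff_sum
    by (intro sum.cong refl) (auto simp: hmonos_def split: if_splits)
  also have "\<dots> = (if (n - b - e, b, e) \<in> hmonos n then c (n - b - e) b e else 0)"
    by (rule sum.delta[OF finite_hmonos])
  also have "\<dots> = (if b + e \<le> n then c (n - b - e) b e else 0)"
    by (auto simp: hmonos_def)
  finally show ?thesis .
qed

lemma form_eq_0_if_form_val_eq_0:
  assumes "hform n c" and "\<And>v. form_val n c v = 0"
  shows "c = (\<lambda>_ _ _. 0)"
proof (intro ext)
  fix a b e
  have "dehomogenize n c = 0"
    by (rule bivariate_poly_eqI) (simp add: poly_dehomogenize assms(2))
  moreover have "c a b e = coeff (coeff (dehomogenize n c) e) b" if "a + b + e = n"
    using that by (auto simp: coeff_dehomogenize)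
  ultimately have "c a b e = 0" if "a + b + e = n"
    using that by simp
  then show "c a b e = 0" using assms(1) by (auto simp: hform_def)
qed

definition dot :: "cpt \<Rightarrow> cpt \<Rightarrow> complex" where
  "dot l v = fst l * fst v + fst (snd l) * fst (snd v) + snd (snd l) * snd (snd v)"

definition linear_form :: "cpt \<Rightarrow> form_coeffs" where
  "linear_form l a b e =
     (if (a, b, e) = (1, 0, 0) then fst l else if (a, b, e) = (0, 1, 0) then fst (snd l)
      else if (a, b, e) = (0, 0, 1) then snd (snd l) else 0)"

lemma form_val_linear_form: "form_val 1 (linear_form l) v = dot l v"
  unfolding form_val_def hmonos_1 by (simp add: linear_form_def dot_def)

definition cross :: "cpt \<Rightarrow> cpt \<Rightarrow> cpt" where
  "cross a b = (fst (snd a) * snd (snd b) - snd (snd a) * fst (snd b),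
                snd (snd a) * fst b - fst a * snd (snd b),
                fst a * fst (snd b) - fst (snd a) * fst b)"

lemma dot_cross: "dot (cross a b) x = det3 x a b"
  by (simp add: dot_def cross_def det3_def split_def algebra_simps)

lemma cross_nonzero: "det3 x a b \<noteq> 0 \<Longrightarrow> cross a b \<noteq> (0, 0, 0)"
  by (metis dot_cross dot_def fst_conv snd_conv mult_zero_left add_0)

lemma dot_vadd: "dot l (vadd a b) = dot l a + dot l b"
  by (simp add: dot_def vadd_def split_def algebra_simps)

lemma dot_smul: "dot l (smul s a) = s * dot l a"
  by (simp add: dot_def smul_def split_def algebra_simps)

lemma det3_repeat: "det3 a a b = 0" "det3 a b a = 0"
  by (simp_all add: det3_def split_def algebra_simps)

lemma det3_swap_23: "det3 p q r = - det3 p r q"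
  by (simp add: det3_def split_def algebra_simps)

definition lincomb :: "cpt \<Rightarrow> cpt \<Rightarrow> cpt \<Rightarrow> complex \<Rightarrow> complex \<Rightarrow> complex \<Rightarrow> cpt" where
  "lincomb p q r x y z = vadd (smul x p) (vadd (smul y q) (smul z r))"

lemma lincomb_surj:
  assumes "det3 p q r \<noteq> 0"
  shows "\<exists>x y z. v = lincomb p q r x y z"
proof -
  define D A B C where "D = det3 p q r" and "A = det3 v q r" and "B = det3 p v r"
    and "C = det3 p q v"
  obtain p1 p2 p3 q1 q2 q3 r1 r2 r3 v1 v2 v3
    where vecs: "p = (p1, p2, p3)" "q = (q1, q2, q3)" "r = (r1, r2, r3)" "v = (v1, v2, v3)"
    by (cases p; cases q; cases r; cases v)
  have cramer: "D * v1 = A * p1 + B * q1 + C * r1" "D * v2 = A * p2 + B * q2 + C * r2"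
    "D * v3 = A * p3 + B * q3 + C * r3"
    unfolding D_def A_def B_def C_def vecs by (simp_all add: det3_def algebra_simps)
  have solve: "v' = A / D * p' + B / D * q' + C / D * r'"
    if "D * v' = A * p' + B * q' + C * r'" for v' p' q' r'
    using that assms by (simp add: D_def field_simps)
  have "v = lincomb p q r (A / D) (B / D) (C / D)"
    using solve[OF cramer(1)] solve[OF cramer(2)] solve[OF cramer(3)]
    unfolding vecs lincomb_def vadd_def smul_def by simp
  then show ?thesis by blast
qed

lemma form_eq_0_if_vanishes_on_lincomb:
  assumes "hform n c" and "det3 p q r \<noteq> 0"
    and "\<And>x y z. form_val n c (lincomb p q r x y z) = 0"
  shows "c = (\<lambda>_ _ _. 0)"
  using assms lincomb_surj by (metis form_eq_0_if_form_val_eq_0)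

text \<open>
  \<open>F(1, t, t\<^sup>2)\<close> is multiplicative and nonzero on nonzero linear forms, so it certifies that a
  product of linear forms is a nonzero form.
\<close>

definition conic_restriction :: "nat \<Rightarrow> form_coeffs \<Rightarrow> complex poly" where
  "conic_restriction n c = (\<Sum>(a, b, e)\<in>hmonos n. smult (c a b e) ([:0, 1:] ^ b * [:0, 0, 1:] ^ e))"

lemma poly_conic_restriction: "poly (conic_restriction n c) t = form_val n c (1, t, t\<^sup>2)"
  by (simp add: conic_restriction_def form_val_def poly_sum split_def power2_eq_square mult_ac)

lemma conic_restriction_form_mult:
  "conic_restriction (n1 + n2) (form_mult n1 c1 n2 c2) = conic_restriction n1 c1 * conic_restriction n2 c2"
  by (simp add: poly_eq_poly_eq_iff[symmetric] fun_eq_iff poly_conic_restriction form_val_form_mult)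

lemma conic_restriction_form_power:
  "conic_restriction (n * k) (form_power n c k) = conic_restriction n c ^ k"
  by (simp add: poly_eq_poly_eq_iff[symmetric] fun_eq_iff poly_conic_restriction form_val_form_power)

lemma conic_restriction_linear_form:
  "conic_restriction 1 (linear_form l) = [:fst l, fst (snd l), snd (snd l):]"
  unfolding conic_restriction_def hmonos_1 by (simp add: linear_form_def)

lemma conic_restriction_linear_form_nonzero: "l \<noteq> (0, 0, 0) \<Longrightarrow> conic_restriction 1 (linear_form l) \<noteq> 0"
  unfolding conic_restriction_linear_form by (cases l) simp

lemma nonzero_if_conic_restriction_nonzero: "conic_restriction n c \<noteq> 0 \<Longrightarrow> c \<noteq> (\<lambda>_ _ _. 0)"
  by (auto simp: conic_restriction_def)

section \<open>Multiplicity at a point of the plane\<close>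

lemma poly_pencil: "poly (pencil n c q v) s = form_val n c (vadd q (smul s v))"
  by (simp add: pencil_def form_val_def poly_sum vadd_def smul_def split_def algebra_simps)

lemma pencil_form_mult:
  "pencil (n1 + n2) (form_mult n1 c1 n2 c2) q v = pencil n1 c1 q v * pencil n2 c2 q v"
  by (simp add: poly_eq_poly_eq_iff[symmetric] fun_eq_iff poly_pencil form_val_form_mult)

lemma pencil_form_power: "pencil (n * k) (form_power n c k) q v = pencil n c q v ^ k"
  by (simp add: poly_eq_poly_eq_iff[symmetric] fun_eq_iff poly_pencil form_val_form_power)

lemma degree_pencil_le: "degree (pencil n c q v) \<le> n"
  unfolding pencil_def
proof (intro degree_sum_le[OF finite_hmonos])
  fix m assume "m \<in> hmonos n"
  then obtain a b e where m: "m = (a, b, e)" and n: "n = a + b + e" by (auto simp: hmonos_def)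
  have deg1: "degree ([:x, y:] ^ k) \<le> k" for x y :: complex and k
  proof -
    have "degree [:x, y:] * k \<le> 1 * k"
      by (rule mult_le_mono1) (rule order.trans[OF degree_pCons_le], simp)
    then show ?thesis using degree_power_le[of "[:x, y:]" k] by (simp only: mult_1 order.trans)
  qed
  show "degree (case m of (a, b, e) \<Rightarrow> smult (c a b e) ([:fst q, fst v:] ^ a
      * [:fst (snd q), fst (snd v):] ^ b * [:snd (snd q), snd (snd v):] ^ e)) \<le> n"
    unfolding m n
    by (auto intro!: order.trans[OF degree_mult_le] add_mono deg1)
qed

lemma mult_plane_ge_mono: "mult_plane_ge n c q m \<Longrightarrow> k \<le> m \<Longrightarrow> mult_plane_ge n c q k"
  unfolding mult_plane_ge_def by (metis dvd_trans le_Suc_ex mult_monom dvd_triv_left mult_1)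

lemma mult_plane_ge_0: "mult_plane_ge n c q 0"
  by (simp add: mult_plane_ge_def)

lemma mult_plane_ge_form_mult:
  "mult_plane_ge n1 c1 q m1 \<Longrightarrow> mult_plane_ge n2 c2 q m2 \<Longrightarrow>
   mult_plane_ge (n1 + n2) (form_mult n1 c1 n2 c2) q (m1 + m2)"
  unfolding mult_plane_ge_def pencil_form_mult by (metis mult_dvd_mono mult_monom mult_1)

lemma mult_plane_ge_form_power:
  "mult_plane_ge n c q m \<Longrightarrow> mult_plane_ge (n * k) (form_power n c k) q (m * k)"
  unfolding mult_plane_ge_def pencil_form_power by (metis dvd_power_same monom_power power_one)

lemma mult_plane_ge_1_iff: "mult_plane_ge n c q 1 \<longleftrightarrow> form_val n c q = 0"
proof -
  have "monom 1 1 = [:- 0, 1 :: complex:]" by (simp add: monom_Suc monom_0)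
  then have "mult_plane_ge n c q 1 \<longleftrightarrow> (\<forall>v. poly (pencil n c q v) 0 = 0)"
    unfolding mult_plane_ge_def by (simp only: poly_eq_0_iff_dvd)
  then show ?thesis by (simp add: poly_pencil vadd_def smul_def split_def)
qed

lemma form_val_eq_0_if_mult_plane_gt_degree:
  assumes "mult_plane_ge n c q (Suc n)"
  shows "form_val n c v = 0"
proof -
  define d where "d = vadd v (smul (-1) q)"
  have "pencil n c q d = 0"
  proof (rule ccontr)
    assume "pencil n c q d \<noteq> 0"
    moreover have "monom 1 (Suc n) dvd pencil n c q d" using assms unfolding mult_plane_ge_def by blast
    ultimately have "Suc n \<le> degree (pencil n c q d)" by (metis dvd_imp_degree_le degree_monom_eq one_neq_zero)
    then show False using degree_pencil_le[of n c q d] by simp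
  qed
  then have "poly (pencil n c q d) 1 = 0" by simp
  moreover have "vadd q (smul 1 d) = v" by (simp add: d_def vadd_def smul_def split_def)
  ultimately show ?thesis by (simp add: poly_pencil)
qed

lemma not_mult_plane_ge_Suc_degree:
  assumes "hform n c" and "c \<noteq> (\<lambda>_ _ _. 0)"
  shows "\<not> mult_plane_ge n c q (Suc n)"
  using assms form_val_eq_0_if_mult_plane_gt_degree form_eq_0_if_form_val_eq_0 by metis

lemma form_val_eq_if_eq_off_0:
  assumes "\<And>s. s \<noteq> 0 \<Longrightarrow> form_val n c (vadd q (smul s v)) = poly A s"
  shows "form_val n c q = poly A 0"
proof -
  have "pencil n c q v = A" using assms by (intro poly_eq_if_eq_off_0) (simp add: poly_pencil)
  then show ?thesis using poly_pencil[of n c q v 0] by (simp add: vadd_def smul_def split_def)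
qed

section \<open>The blow-up chart at a vertex\<close>

lemma poly_bipencil:
  "poly (poly (bipencil n c p r w) [:u:]) t = form_val n c (vadd p (smul u (vadd r (smul t w))))"
  by (simp add: bipencil_def form_val_def poly_sum vadd_def smul_def split_def algebra_simps)

lemma map_poly_eval_bipencil:
  "map_poly (\<lambda>a. poly a t) (bipencil n c p r w) = pencil n c p (vadd r (smul t w))"
  by (simp add: poly_eq_poly_eq_iff[symmetric] fun_eq_iff poly_pencil poly_bipencil
      flip: poly_poly_const_eq_poly_map_poly)

lemma coeff_bipencil_eq_0_if_mult_plane_ge:
  assumes "mult_plane_ge n c p k" and "j < k"
  shows "coeff (bipencil n c p r w) j = 0"
proof -
  have "poly (coeff (bipencil n c p r w) j) t = 0" for t
  proof -
    have "monom 1 k dvd pencil n c p (vadd r (smul t w))"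
      using assms(1) unfolding mult_plane_ge_def by blast
    then have "coeff (pencil n c p (vadd r (smul t w))) j = 0"
      using assms(2) by (auto simp: coeff_monom_mult)
    then show ?thesis by (metis map_poly_eval_bipencil coeff_map_poly poly_0)
  qed
  then show ?thesis using poly_all_0_iff_0 by blast
qed

lemma mult_ge_Ex_if_mult_plane_ge:
  "mult_plane_ge (3 * d) c (P i) (d + m) \<Longrightarrow> mult_ge P d c m (Ex i r)"
  by (simp add: mult_ge_def coeff_bipencil_eq_0_if_mult_plane_ge)

text \<open>
  \<open>G(u, t)\<close> is a polynomial in \<open>u\<close> and \<open>u t\<close> of total degree at most \<open>N\<close>, as is
  \<open>F(p + u r + u t w)\<close> for a form \<open>F\<close> of degree \<open>N\<close>.
\<close>

definition chart_degree_le :: "nat \<Rightarrow> 'a::zero poly poly \<Rightarrow> bool" where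
  "chart_degree_le N G \<longleftrightarrow> degree G \<le> N \<and> (\<forall>k. degree (coeff G k) \<le> k)"

lemma chart_degree_le_mult:
  fixes G H :: "'a::comm_semiring_1 poly poly"
  assumes "chart_degree_le N G" and "chart_degree_le M H"
  shows "chart_degree_le (N + M) (G * H)"
  unfolding chart_degree_le_def
proof (intro conjI allI)
  show "degree (G * H) \<le> N + M"
    using degree_mult_le[of G H] assms by (auto simp: chart_degree_le_def)
  fix k
  show "degree (coeff (G * H) k) \<le> k"
    unfolding coeff_mult
  proof (rule degree_sum_le)
    fix i assume "i \<in> {..k}"
    have "degree (coeff G i * coeff H (k - i)) \<le> i + (k - i)"
      using assms by (intro order.trans[OF degree_mult_le] add_mono) (auto simp: chart_degree_le_def)
    then show "degree (coeff G i * coeff H (k - i)) \<le> k" using \<open>i \<in> {..k}\<close> by simp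
  qed simp
qed

lemma chart_degree_le_power:
  fixes G :: "'a::comm_semiring_1 poly poly"
  shows "chart_degree_le N G \<Longrightarrow> chart_degree_le (N * k) (G ^ k)"
proof (induction k)
  case 0
  show ?case by (simp add: chart_degree_le_def)
next
  case (Suc k)
  then show ?case using chart_degree_le_mult[OF Suc.prems Suc.IH] by simp
qed

lemma chart_degree_le_linear: "chart_degree_le 1 [:[:a:], [:b, e:]:]"
  by (auto simp: chart_degree_le_def coeff_pCons degree_pCons_le split: nat.split)

lemma chart_degree_le_sum:
  assumes "finite A" and "\<And>a. a \<in> A \<Longrightarrow> chart_degree_le N (f a)"
  shows "chart_degree_le N (sum f A)"
  using assms unfolding chart_degree_le_def coeff_sum
  by (auto intro!: degree_sum_le)

lemma chart_degree_le_bipencil: "chart_degree_le n (bipencil n c p r w)"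
  unfolding bipencil_def
proof (rule chart_degree_le_sum[OF finite_hmonos])
  fix m assume "m \<in> hmonos n"
  then obtain a b e where m: "m = (a, b, e)" and n: "n = 1 * a + 1 * b + 1 * e"
    by (auto simp: hmonos_def)
  have "chart_degree_le n ([:[:fst p:], [:fst r, fst w:]:] ^ a
      * [:[:fst (snd p):], [:fst (snd r), fst (snd w):]:] ^ b
      * [:[:snd (snd p):], [:snd (snd r), snd (snd w):]:] ^ e)"
    unfolding n by (intro chart_degree_le_mult chart_degree_le_power chart_degree_le_linear)
  then show "chart_degree_le n (case m of (a, b, e) \<Rightarrow> smult [:c a b e:]
      ([:[:fst p:], [:fst r, fst w:]:] ^ a * [:[:fst (snd p):], [:fst (snd r), fst (snd w):]:] ^ b
       * [:[:snd (snd p):], [:snd (snd r), snd (snd w):]:] ^ e))"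
    unfolding m chart_degree_le_def by (auto intro: order.trans[OF degree_smult_le])
qed

lemma chart_degree_le_3_vanishing_shape:
  fixes G :: "'a::comm_semiring_1 poly poly"
  assumes deg: "chart_degree_le 3 G"
    and vanish: "\<And>k l. 1 \<le> k \<Longrightarrow> k + l \<le> 4 \<Longrightarrow> coeff (coeff G k) l = 0"
  shows "G = monom (monom (coeff (coeff G 0) 0) 0) 0
    + monom (monom (coeff (coeff G 3) 2) 2 + monom (coeff (coeff G 3) 3) 3) 3"
    (is "G = ?H")
proof (intro poly_eqI)
  fix k l
  show "coeff (coeff G k) l = coeff (coeff ?H k) l"
  proof (cases "k \<le> 3 \<and> l \<le> k")
    case True
    then consider "k = 0" "l = 0" | "1 \<le> k" "k + l \<le> 4" | "k = 3" "l = 2" | "k = 3" "l = 3"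
      by linarith
    then show ?thesis by cases (auto simp: vanish)
  next
    case False
    then have "coeff (coeff G k) l = 0"
      using deg unfolding chart_degree_le_def
      by (metis coeff_0 coeff_eq_0 le_less_trans not_le)
    with False show ?thesis by auto
  qed
qed

text \<open>
  The chart reaches the points with \<open>x \<noteq> 0\<close> and \<open>y \<noteq> 0\<close>; the remaining ones are limits along
  lines, on which \<open>F\<close> is a polynomial.
\<close>

lemma form_val_lincomb_if_chart:
  assumes chart: "\<And>u t. form_val 3 c (vadd p (smul u (vadd r (smul t w)))) = u ^ 3 * (g2 * t\<^sup>2 + g3 * t ^ 3)"
  shows "form_val 3 c (lincomb p r w x y z) = g2 * y * z\<^sup>2 + g3 * z ^ 3"
proof -
  have generic: "form_val 3 c (lincomb p r w x y z) = g2 * y * z\<^sup>2 + g3 * z ^ 3"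
    if "x \<noteq> 0" "y \<noteq> 0" for x y z
  proof -
    have "lincomb p r w x y z = smul x (vadd p (smul (y / x) (vadd r (smul (z / y) w))))"
      using that by (simp add: lincomb_def vadd_def smul_def split_def field_simps)
    then show ?thesis
      using that by (simp add: form_val_smul chart field_simps power2_eq_square power3_eq_cube)
  qed
  have off_x_axis: "form_val 3 c (lincomb p r w x y z) = g2 * y * z\<^sup>2 + g3 * z ^ 3"
    if "x \<noteq> 0" for x y z
  proof (cases "y = 0")
    case True
    have "form_val 3 c (lincomb p r w x 0 z) = poly [:g3 * z ^ 3, g2 * z\<^sup>2:] 0"
    proof (rule form_val_eq_if_eq_off_0)
      fix s :: complex assume "s \<noteq> 0"
      have "vadd (lincomb p r w x 0 z) (smul s r) = lincomb p r w x s z"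
        by (simp add: lincomb_def vadd_def smul_def split_def algebra_simps)
      then show "form_val 3 c (vadd (lincomb p r w x 0 z) (smul s r)) = poly [:g3 * z ^ 3, g2 * z\<^sup>2:] s"
        using generic[OF that \<open>s \<noteq> 0\<close>] by (simp add: algebra_simps)
    qed
    with True show ?thesis by simp
  qed (use generic that in blast)
  show ?thesis
  proof (cases "x = 0")
    case True
    have "form_val 3 c (lincomb p r w 0 y z) = poly [:g2 * y * z\<^sup>2 + g3 * z ^ 3:] 0"
    proof (rule form_val_eq_if_eq_off_0)
      fix s :: complex assume "s \<noteq> 0"
      have "vadd (lincomb p r w 0 y z) (smul s p) = lincomb p r w s y z"
        by (simp add: lincomb_def vadd_def smul_def split_def algebra_simps)
      then show "form_val 3 c (vadd (lincomb p r w 0 y z) (smul s p)) = poly [:g2 * y * z\<^sup>2 + g3 * z ^ 3:] s"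
        using off_x_axis[OF \<open>s \<noteq> 0\<close>] by simp
    qed
    with True show ?thesis by simp
  qed (rule off_x_axis)
qed

lemma form_val_lincomb_if_chart_vanishing:
  assumes "form_val 3 c p = 0"
    and "\<forall>j l. j + l < 4 \<longrightarrow> coeff (coeff (bipencil 3 c p r w) (j + 1)) l = 0"
  obtains g2 g3 where "\<And>x y z. form_val 3 c (lincomb p r w x y z) = g2 * y * z\<^sup>2 + g3 * z ^ 3"
proof -
  define G where "G = bipencil 3 c p r w"
  define g0 g2 g3 where "g0 = coeff (coeff G 0) 0" and "g2 = coeff (coeff G 3) 2"
    and "g3 = coeff (coeff G 3) 3"
  have "G = monom (monom g0 0) 0 + monom (monom g2 2 + monom g3 3) 3"
    unfolding g0_def g2_def g3_def G_def
  proof (rule chart_degree_le_3_vanishing_shape[OF chart_degree_le_bipencil])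
    fix k l :: nat assume "1 \<le> k" "k + l \<le> 4"
    then show "coeff (coeff (bipencil 3 c p r w) k) l = 0"
      using assms(2)[rule_format, of "k - 1" l] by simp
  qed
  then have chart: "form_val 3 c (vadd p (smul u (vadd r (smul t w)))) = g0 + u ^ 3 * (g2 * t\<^sup>2 + g3 * t ^ 3)"
    for u t
    by (simp add: G_def flip: poly_bipencil) (simp add: poly_monom algebra_simps)
  moreover have "g0 = 0"
    using chart[of 0 0] assms(1) by (simp add: vadd_def smul_def split_def)
  ultimately show ?thesis
    using that form_val_lincomb_if_chart[of c p r w g2 g3] by simp
qed

section \<open>Cubics with a point of multiplicity four on an exceptional curve\<close>

lemma pnorm_eq_if_normalized_smul:
  assumes "normalized r" and "r = smul l q"
  shows "r = pnorm q"
  using assms by (cases q) (auto simp: normalized_def pnorm_def smul_def field_simps)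

lemma pnorm_eq_smul: "q \<noteq> (0, 0, 0) \<Longrightarrow> \<exists>l. pnorm q = smul l q"
  by (cases q) (auto simp: pnorm_def smul_def intro!: exI[of _ "1 / _"])

lemma cubic_frame_if_chart_on_axis:
  assumes hf: "hform 3 c" and nz: "c \<noteq> (\<lambda>_ _ _. 0)" and det: "det3 p q q' \<noteq> 0" and "l \<noteq> 0"
    and chart: "\<And>x y z. form_val 3 c (lincomb p (smul l q) q' x y z) = g * y * z\<^sup>2"
  shows "\<exists>\<alpha>. \<alpha> \<noteq> 0 \<and> (\<forall>x y z. form_val 3 c (lincomb p q q' x y z) = \<alpha> * y * z\<^sup>2)"
proof -
  have val: "form_val 3 c (lincomb p q q' x y z) = g / l * y * z\<^sup>2" for x y z
  proof -
    have "lincomb p q q' x y z = lincomb p (smul l q) q' x (y / l) z"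
      using \<open>l \<noteq> 0\<close> by (simp add: lincomb_def vadd_def smul_def split_def)
    then show ?thesis using chart by simp
  qed
  have "g / l \<noteq> 0"
  proof
    assume "g / l = 0"
    then have "c = (\<lambda>_ _ _. 0)"
      using val by (intro form_eq_0_if_vanishes_on_lincomb[OF hf det]) (metis mult_zero_left)
    with nz show False by simp
  qed
  with val show ?thesis by blast
qed

lemma cubic_chart_off_axes:
  assumes hf: "hform 3 c" and det: "det3 p q1 q2 \<noteq> 0" and Fq2: "form_val 3 c q2 = 0"
    and "a \<noteq> 0" "b \<noteq> 0"
    and chart: "\<And>x y z. form_val 3 c (lincomb p (vadd (smul a q1) (smul b q2)) q1 x y z) = g * y * z\<^sup>2"
  shows "c = (\<lambda>_ _ _. 0)"
proof -
  let ?r = "vadd (smul a q1) (smul b q2)"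
  have "q2 = lincomb p ?r q1 0 (1 / b) (- a / b)"
    using \<open>b \<noteq> 0\<close> by (simp add: lincomb_def vadd_def smul_def split_def field_simps)
  then have "g = 0" using chart[of 0 "1 / b" "- a / b"] Fq2 \<open>a \<noteq> 0\<close> \<open>b \<noteq> 0\<close> by simp
  moreover have "lincomb p q1 q2 x y z = lincomb p ?r q1 x (z / b) (y - z * a / b)" for x y z
    using \<open>b \<noteq> 0\<close> by (simp add: lincomb_def vadd_def smul_def split_def field_simps)
  ultimately show ?thesis
    using chart by (intro form_eq_0_if_vanishes_on_lincomb[OF hf det]) simp
qed

lemma cubic_chart_classification:
  assumes det: "det3 p q1 q2 \<noteq> 0" and hf: "hform 3 c" and nz: "c \<noteq> (\<lambda>_ _ _. 0)"
    and Fq1: "form_val 3 c q1 = 0" and Fq2: "form_val 3 c q2 = 0"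
    and nr: "normalized r" and r: "r = vadd (smul a q1) (smul b q2)"
    and w: "w = (if \<exists>l. r = smul l q1 then q2 else q1)"
    and chart: "\<And>x y z. form_val 3 c (lincomb p r w x y z) = g2 * y * z\<^sup>2 + g3 * z ^ 3"
  shows "\<exists>\<alpha>. \<alpha> \<noteq> 0 \<and>
    (r = pnorm q1 \<and> (\<forall>x y z. form_val 3 c (lincomb p q1 q2 x y z) = \<alpha> * y * z\<^sup>2) \<or>
     r = pnorm q2 \<and> (\<forall>x y z. form_val 3 c (lincomb p q2 q1 x y z) = \<alpha> * y * z\<^sup>2))"
proof -
  have "form_val 3 c w = 0" using w Fq1 Fq2 by simp
  moreover have "lincomb p r w 0 0 1 = w" by (simp add: lincomb_def vadd_def smul_def split_def)
  ultimately have "g3 = 0" using chart[of 0 0 1] by simp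
  then have chart': "\<And>x y z. form_val 3 c (lincomb p r w x y z) = g2 * y * z\<^sup>2"
    using chart by simp
  have r0: "r \<noteq> (0, 0, 0)" using nr by (auto simp: normalized_def)
  show ?thesis
  proof (cases "\<exists>l. r = smul l q1")
    case True
    then obtain l where l: "r = smul l q1" by blast
    then have "l \<noteq> 0" using r0 by (auto simp: smul_def)
    moreover have "w = q2" using w True by simp
    ultimately show ?thesis
      using cubic_frame_if_chart_on_axis[OF hf nz det] chart' pnorm_eq_if_normalized_smul[OF nr l]
      unfolding l by blast
  next
    case not_q1: False
    then have w_q1: "w = q1" using w by simp
    show ?thesis
    proof (cases "\<exists>l. r = smul l q2")
      case True
      then obtain l where l: "r = smul l q2" by blast
      then have "l \<noteq> 0" using r0 by (auto simp: smul_def)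
      moreover have "det3 p q2 q1 \<noteq> 0" using det det3_swap_23[of p q1 q2] by simp
      ultimately show ?thesis
        using cubic_frame_if_chart_on_axis[OF hf nz] chart' w_q1 pnorm_eq_if_normalized_smul[OF nr l]
        unfolding l by blast
    next
      case not_q2: False
      have "a \<noteq> 0" using not_q2 r by (auto simp: vadd_def smul_def split_def)
      moreover have "b \<noteq> 0" using not_q1 r by (auto simp: vadd_def smul_def split_def)
      ultimately have "c = (\<lambda>_ _ _. 0)"
        using cubic_chart_off_axes[OF hf det Fq2] chart' unfolding w_q1 r by blast
      then show ?thesis using nz by simp
    qed
  qed
qed

lemma permutation_of_123_cases:
  fixes i j k :: nat
  assumes "i \<in> {1, 2, 3}" "j \<in> {1, 2, 3}" "k \<in> {1, 2, 3}" "i \<noteq> j" "i \<noteq> k" "j \<noteq> k"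
  shows "(i, j, k) \<in> {(1, 2, 3), (1, 3, 2), (2, 1, 3), (2, 3, 1), (3, 1, 2), (3, 2, 1 :: nat)}"
  using assms by auto

lemma lincomb_permute:
  fixes i j k :: nat
  assumes "i \<in> {1, 2, 3}" "j \<in> {1, 2, 3}" "k \<in> {1, 2, 3}" "i \<noteq> j" "i \<noteq> k" "j \<noteq> k"
  shows "lincomb (P i) (P j) (P k) (x i) (x j) (x k) = lincomb (P 1) (P 2) (P 3) (x 1) (x 2) (x 3)"
  using permutation_of_123_cases[OF assms]
  by (auto simp: lincomb_def vadd_def smul_def split_def algebra_simps)

lemma det3_permute_nonzero:
  fixes i j k :: nat
  assumes "det3 (P 1) (P 2) (P 3) \<noteq> 0"
    and "i \<in> {1, 2, 3}" "j \<in> {1, 2, 3}" "k \<in> {1, 2, 3}" "i \<noteq> j" "i \<noteq> k" "j \<noteq> k"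
  shows "det3 (P i) (P j) (P k) \<noteq> 0"
proof -
  have "det3 (P i) (P j) (P k) = det3 (P 1) (P 2) (P 3) \<or> det3 (P i) (P j) (P k) = - det3 (P 1) (P 2) (P 3)"
    using permutation_of_123_cases[OF assms(2-)]
    by (auto simp: det3_def split_def algebra_simps)
  then show ?thesis using assms(1) by auto
qed

lemma vertex_nonzero: "det3 (P 1) (P 2) (P 3) \<noteq> 0 \<Longrightarrow> j \<in> {1, 2, 3} \<Longrightarrow> P j \<noteq> (0, 0, 0)"
  by (auto simp: det3_def split_def)

lemma oth_distinct:
  "i \<in> {1, 2, 3} \<Longrightarrow>
    oth1 i \<in> {1, 2, 3} \<and> oth2 i \<in> {1, 2, 3} \<and> oth1 i \<noteq> i \<and> oth2 i \<noteq> i \<and> oth1 i \<noteq> oth2 i"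
  by (auto simp: oth1_def oth2_def)

lemma mult_ge_4_on_exceptional_curve:
  assumes det: "det3 (P 1) (P 2) (P 3) \<noteq> 0" and lin: "in_linsys P 1 c"
    and mult: "mult_ge P 1 c 4 (Ex i r)" and S3: "in_S3 P (Ex i r)"
  obtains j k \<alpha> where "j \<in> {1, 2, 3}" "k \<in> {1, 2, 3}" "i \<noteq> j" "i \<noteq> k" "j \<noteq> k"
    "r = pnorm (P j)" "\<alpha> \<noteq> 0" "\<And>x y z. form_val 3 c (lincomb (P i) (P j) (P k) x y z) = \<alpha> * y * z\<^sup>2"
proof -
  have hf: "hform 3 c" and nz: "c \<noteq> (\<lambda>_ _ _. 0)"
    and vertex: "\<And>m. m \<in> {1, 2, 3} \<Longrightarrow> form_val 3 c (P m) = 0"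
    using lin by (auto simp: in_linsys_def simp flip: mult_plane_ge_1_iff)
  obtain a b where i: "i \<in> {1, 2, 3}" and nr: "normalized r"
    and r: "r = vadd (smul a (P (oth1 i))) (smul b (P (oth2 i)))"
    using S3 unfolding in_S3_def by auto
  note oth = oth_distinct[OF i]
  have "\<forall>j l. j + l < 4 \<longrightarrow> coeff (coeff (bipencil 3 c (P i) r (chartw P i r)) (j + 1)) l = 0"
    using mult unfolding mult_ge_def by simp
  then obtain g2 g3 where chart:
    "\<And>x y z. form_val 3 c (lincomb (P i) r (chartw P i r) x y z) = g2 * y * z\<^sup>2 + g3 * z ^ 3"
    using form_val_lincomb_if_chart_vanishing[OF vertex[OF i]] by blast
  have det_i: "det3 (P i) (P (oth1 i)) (P (oth2 i)) \<noteq> 0"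
    using oth by (intro det3_permute_nonzero[OF det i]) simp_all
  have F_oth: "form_val 3 c (P (oth1 i)) = 0" "form_val 3 c (P (oth2 i)) = 0"
    using oth by (simp_all add: vertex)
  obtain \<alpha> where "\<alpha> \<noteq> 0" and
    "r = pnorm (P (oth1 i)) \<and> (\<forall>x y z. form_val 3 c (lincomb (P i) (P (oth1 i)) (P (oth2 i)) x y z) = \<alpha> * y * z\<^sup>2) \<or>
     r = pnorm (P (oth2 i)) \<and> (\<forall>x y z. form_val 3 c (lincomb (P i) (P (oth2 i)) (P (oth1 i)) x y z) = \<alpha> * y * z\<^sup>2)"
    using cubic_chart_classification[OF det_i hf nz F_oth nr r chartw_def chart] by blast
  then show ?thesis using that oth by metis
qed

lemma mult_ge_4_classification:
  assumes det: "det3 (P 1) (P 2) (P 3) \<noteq> 0" and lin: "in_linsys P 1 c"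
    and mult: "mult_ge P 1 c 4 Q" and S3: "in_S3 P Q"
  obtains i j \<alpha> where "i \<in> {1, 2, 3}" "j \<in> {1, 2, 3}" "i \<noteq> j" "Q = Ex i (pnorm (P j))" "\<alpha> \<noteq> 0"
    "\<And>x. form_val 3 c (lincomb (P 1) (P 2) (P 3) (x 1) (x 2) (x 3)) = \<alpha> * x j * (x (6 - i - j))\<^sup>2"
proof (cases Q)
  case (Pl q)
  then have "mult_plane_ge 3 c q (Suc 3)" using mult by (simp add: mult_ge_def)
  with lin show ?thesis using not_mult_plane_ge_Suc_degree[of 3 c q] by (simp add: in_linsys_def)
next
  case (Ex i r)
  then have i: "i \<in> {1, 2, 3}" using S3 by (simp add: in_S3_def)
  obtain j k \<alpha> where jk: "j \<in> {1, 2, 3}" "k \<in> {1, 2, 3}" "i \<noteq> j" "i \<noteq> k" "j \<noteq> k"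
    and "r = pnorm (P j)" "\<alpha> \<noteq> 0"
    and val: "\<And>x y z. form_val 3 c (lincomb (P i) (P j) (P k) x y z) = \<alpha> * y * z\<^sup>2"
    using mult_ge_4_on_exceptional_curve[OF det lin] mult S3 unfolding Ex by metis
  moreover have "k = 6 - i - j" using i jk by auto
  ultimately show ?thesis
    using that[of i j \<alpha>] i val lincomb_permute[OF i jk] unfolding Ex by metis
qed

lemma cubic_monomial_indices_unique:
  fixes \<alpha> \<alpha>' :: complex
  assumes "i \<in> {1, 2, 3}" "j \<in> {1, 2, 3}" "i \<noteq> j" "i' \<in> {1, 2, 3}" "j' \<in> {1, 2, 3}" "i' \<noteq> j'"
    and "\<alpha> \<noteq> 0"
    and eq: "\<And>x :: nat \<Rightarrow> complex. \<alpha> * x j * (x (6 - i - j))\<^sup>2 = \<alpha>' * x j' * (x (6 - i' - j'))\<^sup>2"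
  shows "i = i' \<and> j = j'"
proof -
  \<comment> \<open>\<open>x m = m\<close> separates the six monomials \<open>x\<^sub>j x\<^sub>k\<^sup>2\<close>.\<close>
  have "\<alpha> = \<alpha>'" using eq[of "\<lambda>_. 1"] by simp
  then have "of_nat (j * (6 - i - j)\<^sup>2) = (of_nat (j' * (6 - i' - j')\<^sup>2) :: complex)"
    using eq[of of_nat] \<open>\<alpha> \<noteq> 0\<close> by simp
  then have "j * (6 - i - j)\<^sup>2 = j' * (6 - i' - j')\<^sup>2" by (simp only: of_nat_eq_iff)
  then show ?thesis using assms(1-6) by auto
qed

definition double_line_cubic :: "cpt \<Rightarrow> cpt \<Rightarrow> form_coeffs" where
  "double_line_cubic l1 l2 = form_mult 2 (form_mult 1 (linear_form l1) 1 (linear_form l1)) 1 (linear_form l2)"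

lemma form_val_double_line_cubic: "form_val 3 (double_line_cubic l1 l2) v = (dot l1 v)\<^sup>2 * dot l2 v"
  using form_val_form_mult[of 2 1] form_val_form_mult[of 1 1]
  by (simp add: double_line_cubic_def form_val_linear_form power2_eq_square del: One_nat_def)

lemma hform_double_line_cubic: "hform 3 (double_line_cubic l1 l2)"
  using hform_form_mult[of 2 1] by (simp add: double_line_cubic_def del: One_nat_def)

lemma double_line_cubic_nonzero:
  assumes "l1 \<noteq> (0, 0, 0)" and "l2 \<noteq> (0, 0, 0)"
  shows "double_line_cubic l1 l2 \<noteq> (\<lambda>_ _ _. 0)"
proof -
  have "conic_restriction 3 (double_line_cubic l1 l2) \<noteq> 0"
    using assms conic_restriction_form_mult[of 2 1] conic_restriction_form_mult[of 1 1]
      conic_restriction_linear_form_nonzero by (simp add: double_line_cubic_def del: One_nat_def)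
  then show ?thesis by (rule nonzero_if_conic_restriction_nonzero)
qed

lemma mult_ge_4_witness:
  fixes i j :: nat
  assumes det: "det3 (P 1) (P 2) (P 3) \<noteq> 0"
    and ij: "i \<in> {1, 2, 3}" "j \<in> {1, 2, 3}" "i \<noteq> j"
  defines "c \<equiv> double_line_cubic (cross (P i) (P j)) (cross (P i) (P (6 - i - j)))"
  shows "in_linsys P 1 c \<and> mult_ge P 1 c 4 (Ex i (pnorm (P j)))"
proof -
  define k where "k = 6 - i - j"
  have k: "k \<in> {1, 2, 3}" "i \<noteq> k" "j \<noteq> k" using ij by (auto simp: k_def)
  define l1 l2 where "l1 = cross (P i) (P j)" and "l2 = cross (P i) (P k)"
  have "det3 (P k) (P i) (P j) \<noteq> 0"
    by (rule det3_permute_nonzero[OF det k(1) ij(1,2)]) (use ij k in auto)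
  moreover have "det3 (P j) (P i) (P k) \<noteq> 0"
    by (rule det3_permute_nonzero[OF det ij(2,1) k(1)]) (use ij k in auto)
  ultimately have "c \<noteq> (\<lambda>_ _ _. 0)"
    unfolding c_def k_def[symmetric] by (intro double_line_cubic_nonzero) (auto dest: cross_nonzero)
  moreover have dots: "dot l1 (P i) = 0" "dot l1 (P j) = 0" "dot l2 (P i) = 0" "dot l2 (P k) = 0"
    by (simp_all add: l1_def l2_def dot_cross det3_repeat)
  moreover have val: "form_val 3 c v = (dot l1 v)\<^sup>2 * dot l2 v" for v
    by (simp add: c_def l1_def l2_def k_def form_val_double_line_cubic)
  moreover have "m = i \<or> m = j \<or> m = k" if "m \<in> {1, 2, 3}" for m
    using that ij k by auto
  ultimately have lin: "in_linsys P 1 c"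
    by (auto simp: in_linsys_def c_def hform_double_line_cubic mult_plane_ge_1_iff[simplified])
  define r w where "r = pnorm (P j)" and "w = chartw P i r"
  obtain s where "r = smul s (P j)"
    using pnorm_eq_smul[OF vertex_nonzero[OF det ij(2)]] by (auto simp: r_def)
  then have "dot l1 r = 0" using dots by (simp add: dot_smul)
  then have "bipencil 3 c (P i) r w = monom (smult ((dot l1 w)\<^sup>2) [:0, 0, dot l2 r, dot l2 w:]) 3"
    by (intro bivariate_poly_eqI) (simp add: poly_bipencil val dot_vadd dot_smul dots poly_monom
        power2_eq_square power3_eq_cube algebra_simps)
  then have "mult_ge P 1 c 4 (Ex i r)"
    unfolding mult_ge_def w_def by (auto simp: coeff_monom less_Suc_eq numeral_2_eq_2)
  with lin show ?thesis unfolding r_def by blast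
qed

section \<open>Existence of sections and the least degree\<close>

lemma ex_form_vanishing_on_finite:
  assumes "finite S"
  shows "\<exists>N h. hform N h \<and> conic_restriction N h \<noteq> 0 \<and> (\<forall>q\<in>S. form_val N h q = 0)"
  using assms
proof (induction S rule: finite_induct)
  case empty
  have "hform 0 form_one" "conic_restriction 0 form_one = 1"
    by (auto simp: hform_def form_one_def conic_restriction_def hmonos_0)
  then show ?case by fastforce
next
  case (insert q S)
  then obtain N h where h: "hform N h" "conic_restriction N h \<noteq> 0" "\<forall>q\<in>S. form_val N h q = 0"
    by blast
  obtain l where l: "l \<noteq> (0, 0, 0)" "dot l q = 0"
  proof (cases "fst q = 0 \<and> fst (snd q) = 0")
    case True
    then show ?thesis using that[of "(1, 0, 0)"] by (simp add: dot_def)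
  next
    case False
    then show ?thesis using that[of "(fst (snd q), - fst q, 0)"] by (auto simp: dot_def)
  qed
  let ?h = "form_mult 1 (linear_form l) N h"
  have "hform (1 + N) ?h" "conic_restriction (1 + N) ?h \<noteq> 0"
    using hform_form_mult h(2) conic_restriction_linear_form_nonzero[OF l(1)]
    by (simp_all add: conic_restriction_form_mult del: One_nat_def)
  moreover have "\<forall>q'\<in>insert q S. form_val (1 + N) ?h q' = 0"
    using h(3) l(2) by (simp add: form_val_form_mult form_val_linear_form del: One_nat_def)
  ultimately show ?case by blast
qed

definition triangle_form :: "(nat \<Rightarrow> cpt) \<Rightarrow> form_coeffs" where
  "triangle_form P = form_mult 2 (form_mult 1 (linear_form (cross (P 1) (P 2))) 1
      (linear_form (cross (P 1) (P 3)))) 1 (linear_form (cross (P 2) (P 3)))"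

lemma conic_restriction_triangle_form_nonzero:
  assumes det: "det3 (P 1) (P 2) (P 3) \<noteq> 0"
  shows "conic_restriction 3 (triangle_form P) \<noteq> 0"
proof -
  have "cross (P 1) (P 2) \<noteq> (0, 0, 0)" "cross (P 1) (P 3) \<noteq> (0, 0, 0)" "cross (P 2) (P 3) \<noteq> (0, 0, 0)"
    using det det3_permute_nonzero[OF det, of 3 1 2] det3_permute_nonzero[OF det, of 2 1 3]
    by (auto intro!: cross_nonzero)
  then show ?thesis
    using conic_restriction_form_mult[of 2 1] conic_restriction_form_mult[of 1 1]
      conic_restriction_linear_form_nonzero
    by (simp add: triangle_form_def del: One_nat_def)
qed

lemma mult_plane_ge_side_line:
  "mult_plane_ge 1 (linear_form (cross (P a) (P b))) (P i) (if i = a \<or> i = b then 1 else 0)"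
  by (auto simp: mult_plane_ge_1_iff form_val_linear_form dot_cross det3_repeat mult_plane_ge_0
      simp del: One_nat_def)

lemma mult_plane_ge_triangle_form:
  assumes "i \<in> {1, 2, 3}"
  shows "mult_plane_ge 3 (triangle_form P) (P i) 2"
proof -
  have "mult_plane_ge (1 + 1 + 1) (triangle_form P) (P i)
      ((if i = 1 \<or> i = 2 then 1 else 0) + (if i = 1 \<or> i = 3 then 1 else 0) + (if i = 2 \<or> i = 3 then 1 else 0))"
    unfolding triangle_form_def one_add_one[symmetric]
    by (intro mult_plane_ge_form_mult mult_plane_ge_side_line)
  then show ?thesis using assms by (auto simp: eval_nat_numeral)
qed

text \<open>
  Take \<open>h\<^sup>3\<^sup>m\<close> (the exponent makes the degree divisible by 3) for a product \<open>h\<close> of lines through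
  the points of \<open>Z\<close> off the exceptional curves, times a power \<open>a\<close> of the triangle, whose
  multiplicity \<open>2a = d + m\<close> at the vertices leaves multiplicity \<open>m\<close> along each \<open>E\<^sub>i\<close>.
\<close>

lemma ex_linsys_mult_ge:
  assumes det: "det3 (P 1) (P 2) (P 3) \<noteq> 0" and fin: "finite Z" and S3: "\<forall>Q\<in>Z. in_S3 P Q"
  shows "\<exists>d c. in_linsys P d c \<and> (\<forall>Q\<in>Z. mult_ge P d c m Q)"
proof -
  have "finite (Pl -` Z)" using fin by (rule finite_vimageI) (simp add: inj_def)
  then obtain N h where h: "hform N h" "conic_restriction N h \<noteq> 0" "\<forall>q\<in>Pl -` Z. form_val N h q = 0"
    using ex_form_vanishing_on_finite by meson
  define a where "a = N * m + m"
  define d where "d = a + N * m"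
  define G where "G = form_mult (3 * a) (form_power 3 (triangle_form P) a) (N * (3 * m)) (form_power N h (3 * m))"
  have deg: "3 * d = 3 * a + N * (3 * m)" by (simp add: d_def)
  have "conic_restriction (3 * d) G \<noteq> 0"
    using conic_restriction_triangle_form_nonzero[OF det] h(2)
    unfolding deg G_def conic_restriction_form_mult conic_restriction_form_power by simp
  then have nz: "G \<noteq> (\<lambda>_ _ _. 0)" by (rule nonzero_if_conic_restriction_nonzero)
  have vertex: "mult_plane_ge (3 * d) G (P i) (d + m)" if "i \<in> {1, 2, 3}" for i
  proof -
    have "mult_plane_ge (3 * d) G (P i) (2 * a + 0)"
      unfolding deg G_def
      using mult_plane_ge_form_power[OF mult_plane_ge_triangle_form[OF that], of a]
      by (intro mult_plane_ge_form_mult mult_plane_ge_0) (simp add: mult.commute)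
    moreover have "2 * a + 0 = d + m" by (simp add: a_def d_def)
    ultimately show ?thesis by simp
  qed
  then have "in_linsys P d G"
    using nz hform_form_mult[of "3 * a" "N * (3 * m)"] mult_plane_ge_mono[OF vertex]
    by (simp add: in_linsys_def deg G_def)
  moreover have "mult_ge P d G m Q" if "Q \<in> Z" for Q
  proof (cases Q)
    case (Pl q)
    then have "mult_plane_ge N h q 1" using h(3) that by (simp add: mult_plane_ge_1_iff del: One_nat_def)
    then have "mult_plane_ge (3 * d) G q (0 + 1 * (3 * m))"
      unfolding deg G_def by (intro mult_plane_ge_form_mult mult_plane_ge_0 mult_plane_ge_form_power)
    then show ?thesis unfolding Pl mult_ge_def s3pt.case by (rule mult_plane_ge_mono) simp
  next
    case (Ex i r)
    then have "i \<in> {1, 2, 3}" using S3 that by (auto simp: in_S3_def)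
    then show ?thesis unfolding Ex by (intro mult_ge_Ex_if_mult_plane_ge vertex)
  qed
  ultimately show ?thesis by blast
qed

lemma mult_ge_mono: "mult_ge P d c m Q \<Longrightarrow> k \<le> m \<Longrightarrow> mult_ge P d c k Q"
  by (cases Q) (auto simp: mult_ge_def intro: mult_plane_ge_mono)

lemma not_mult_ge_degree_0: "\<not> (in_linsys P 0 c \<and> mult_ge P 0 c (Suc m) Q)"
proof
  assume "in_linsys P 0 c \<and> mult_ge P 0 c (Suc m) Q"
  then have hf: "hform 0 c" and nz: "c \<noteq> (\<lambda>_ _ _. 0)" and mult: "mult_ge P 0 c 1 Q"
    using mult_ge_mono by (auto simp: in_linsys_def)
  have const: "form_val 0 c v = c 0 0 0" for v by (simp add: form_val_def hmonos_0)
  have "c 0 0 0 = 0"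
  proof (cases Q)
    case (Pl q)
    then show ?thesis using mult const by (simp add: mult_ge_def mult_plane_ge_1_iff del: One_nat_def)
  next
    case (Ex i r)
    then have "coeff (coeff (bipencil 0 c (P i) r (chartw P i r)) 0) 0 = 0"
      using mult by (simp add: mult_ge_def)
    then show ?thesis
      using poly_bipencil[of 0 c "P i" r "chartw P i r" 0 0] const by (simp add: poly_0_coeff_0)
  qed
  then have "c = (\<lambda>_ _ _. 0)"
    using hf by (intro ext) (metis hform_def add_is_0)
  with nz show False by simp
qed

text \<open>The existence hypothesis matters: for an empty set \<open>LEAST\<close> returns an unspecified value.\<close>

lemma alpha_eq_1_iff:
  assumes "Z \<noteq> {}" and "1 \<le> m" and "\<exists>d c. in_linsys P d c \<and> (\<forall>Q\<in>Z. mult_ge P d c m Q)"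
  shows "alpha P m Z = 1 \<longleftrightarrow> (\<exists>c. in_linsys P 1 c \<and> (\<forall>Q\<in>Z. mult_ge P 1 c m Q))"
proof
  assume "alpha P m Z = 1"
  then show "\<exists>c. in_linsys P 1 c \<and> (\<forall>Q\<in>Z. mult_ge P 1 c m Q)"
    using LeastI_ex[OF assms(3)] by (simp add: alpha_def)
next
  assume one: "\<exists>c. in_linsys P 1 c \<and> (\<forall>Q\<in>Z. mult_ge P 1 c m Q)"
  have no_degree_0: "\<not> (in_linsys P 0 c \<and> (\<forall>Q\<in>Z. mult_ge P 0 c m Q))" for c
    using assms(1,2) not_mult_ge_degree_0[of P c "m - 1"] by auto
  show "alpha P m Z = 1"
    unfolding alpha_def
  proof (rule Least_equality)
    show "\<exists>c. in_linsys P 1 c \<and> (\<forall>Q\<in>Z. mult_ge P 1 c m Q)" by (rule one)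
  next
    fix d assume "\<exists>c. in_linsys P d c \<and> (\<forall>Q\<in>Z. mult_ge P d c m Q)"
    with no_degree_0 show "1 \<le> d" by (cases d) auto
  qed
qed

lemma mult_ge_4_point_unique:
  assumes det: "det3 (P 1) (P 2) (P 3) \<noteq> 0" and lin: "in_linsys P 1 c"
    and "mult_ge P 1 c 4 Q" "in_S3 P Q" and "mult_ge P 1 c 4 Q'" "in_S3 P Q'"
  shows "Q = Q'"
proof -
  obtain i j \<alpha> where ij: "i \<in> {1, 2, 3}" "j \<in> {1, 2, 3}" "i \<noteq> j" "Q = Ex i (pnorm (P j))"
    and "\<alpha> \<noteq> 0"
    and val: "\<And>x. form_val 3 c (lincomb (P 1) (P 2) (P 3) (x 1) (x 2) (x 3)) = \<alpha> * x j * (x (6 - i - j))\<^sup>2"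
    by (rule mult_ge_4_classification[OF det lin assms(3,4)]) blast
  obtain i' j' \<alpha>' where ij': "i' \<in> {1, 2, 3}" "j' \<in> {1, 2, 3}" "i' \<noteq> j'" "Q' = Ex i' (pnorm (P j'))"
    and val': "\<And>x. form_val 3 c (lincomb (P 1) (P 2) (P 3) (x 1) (x 2) (x 3)) = \<alpha>' * x j' * (x (6 - i' - j'))\<^sup>2"
    by (rule mult_ge_4_classification[OF det lin assms(5,6)]) blast
  have "i = i' \<and> j = j'"
  proof (rule cubic_monomial_indices_unique[OF ij(1-3) ij'(1-3) \<open>\<alpha> \<noteq> 0\<close>])
    show "\<alpha> * x j * (x (6 - i - j))\<^sup>2 = \<alpha>' * x j' * (x (6 - i' - j'))\<^sup>2" for x
      using val[of x] val'[of x] by simp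
  qed
  then show ?thesis using ij(4) ij'(4) by simp
qed

theorem theorem8:
  fixes P :: "nat \<Rightarrow> cpt" and Z :: "s3pt set"
  assumes "det3 (P 1) (P 2) (P 3) \<noteq> 0"
    and "finite Z" and "Z \<noteq> {}" and "\<forall>Q\<in>Z. in_S3 P Q"
  shows "(alpha P 1 Z = 1 \<and> alpha P 2 Z = 1 \<and> alpha P 3 Z = 1 \<and> alpha P 4 Z = 1)
    \<longleftrightarrow> (\<exists>i j. i \<in> {1,2,3} \<and> j \<in> {1,2,3} \<and> i \<noteq> j \<and> Z = {Ex i (pnorm (P j))})"
proof
  assume "alpha P 1 Z = 1 \<and> alpha P 2 Z = 1 \<and> alpha P 3 Z = 1 \<and> alpha P 4 Z = 1"
  then obtain c where lin: "in_linsys P 1 c" and mult: "\<forall>Q\<in>Z. mult_ge P 1 c 4 Q"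
    using alpha_eq_1_iff[OF assms(3) _ ex_linsys_mult_ge[OF assms(1,2,4)], of 4] by auto
  obtain Q where Q: "Q \<in> Z" using assms(3) by blast
  then obtain i j where "i \<in> {1, 2, 3}" "j \<in> {1, 2, 3}" "i \<noteq> j" "Q = Ex i (pnorm (P j))"
    using mult_ge_4_classification[OF assms(1) lin] mult assms(4) by metis
  moreover have "Z = {Q}"
    using Q mult assms(4) mult_ge_4_point_unique[OF assms(1) lin] by blast
  ultimately show "\<exists>i j. i \<in> {1,2,3} \<and> j \<in> {1,2,3} \<and> i \<noteq> j \<and> Z = {Ex i (pnorm (P j))}"
    by blast
next
  assume "\<exists>i j. i \<in> {1,2,3} \<and> j \<in> {1,2,3} \<and> i \<noteq> j \<and> Z = {Ex i (pnorm (P j))}"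
  then obtain i j where ij: "i \<in> {1, 2, 3}" "j \<in> {1, 2, 3}" "i \<noteq> j" and Z: "Z = {Ex i (pnorm (P j))}"
    by blast
  obtain c where lin: "in_linsys P 1 c" and mult: "mult_ge P 1 c 4 (Ex i (pnorm (P j)))"
    using mult_ge_4_witness[OF assms(1) ij] by blast
  have "alpha P m Z = 1" if "1 \<le> m" "m \<le> 4" for m
    using alpha_eq_1_iff[OF assms(3) that(1) ex_linsys_mult_ge[OF assms(1,2,4)]]
      lin mult_ge_mono[OF mult that(2)] Z by auto
  then show "alpha P 1 Z = 1 \<and> alpha P 2 Z = 1 \<and> alpha P 3 Z = 1 \<and> alpha P 4 Z = 1" by simp
qed

end
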